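(* Let $\Phi=\varphi\land\bigwedge RE\land\bigwedge DI$ be an $\mathcal{ALCQIO}_{b,Re}$-formula over $\tau$ with $RE=\{\mathit{Reach}(B_1,S_1,A_1),\dots,\mathit{Reach}(B_h,S_h,A_h)\}$, let $\mathcal{M}$ be a $\tau$-structure, $1\le h'\le h$, and let $f$ be an $h'$-useful labeling for $\mathcal{M}$. Then $\mathit{val}_f(D^{\mathcal{M}}_{h'})=0$ iff $D^{\mathcal{M}}_{h'}$ is connected, i.e. every vertex of $D^{\mathcal{M}}_{h'}$ is reachable from a vertex of $B_{h'}^{\mathcal{M}}$.
   Context: Structures are finite; $\tau$ has atomic concepts, atomic roles (a subset $\mathsf{N_F}$ functional) and nominals. $\mathcal{ALCQIO}_b$ is the description logic with concepts built from atomic concepts and nominals using $\sqcap,\sqcup,\neg,\exists r.C,\exists^{\le n}r.C$ (roles atomic or inverse) and formulae Boolean combinations of inclusions $C\sqsubseteq D$. A reachability assertion $\mathit{Reach}(B,S,A)$ has atomic concepts $A,B$ and $S\subseteq\mathsf{N_F}$; an $\mathcal{ALCQIO}_{b,Re}$-formula is $\Phi=\varphi\land\bigwedge RE\land\bigwedge DI$ with $\varphi\in\mathcal{ALCQIO}_b$, $RE$ a finite set of reachability assertions and $DI$ a finite set of disjointness assertions $A_1\sqcap A_2\equiv\bot$, compatible (whenever two assertions in $RE$ share a role, their $A$-concepts are declared disjoint in $DI$). $D^{\mathcal{M}}_{h'}$ is the directed graph on vertex set $A_{h'}^{\mathcal{M}}$ with edges $\bigcup_{s\in S_{h'}}s^{\mathcal{M}}\cap(A_{h'}^{\mathcal{M}}\times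 A_{h'}^{\mathcal{M}})$. Types: $\mathrm{Con}(\varphi)$ is the set of concepts occurring in $\varphi$ (including subconcepts), $\mathrm{TYPES}_\varphi$ its power set, $\overline{tp}^{\varphi}_{\mathcal{M}}(u)=\{C\in\mathrm{Con}(\varphi)\mid u\in C^{\mathcal{M}}\}$. An $h'$-useful labeling for $\mathcal{M}$ is $f:A_{h'}^{\mathcal{M}}\to[1,|\mathrm{TYPES}_\varphi|]$ such that (1) $f(u)=f(v)$ implies equal types, and (2) for every $u\in A_{h'}^{\mathcal{M}}$, either $u\in B_{h'}^{\mathcal{M}}$ or there are $v,w\in A_{h'}^{\mathcal{M}}$ with $f(u)=f(v)$, $f(w)<f(v)$ and $(w,v)$ an edge of $D^{\mathcal{M}}_{h'}$. A base for $D^{\mathcal{M}}_{h'}$ is a set $X\subseteq A_{h'}^{\mathcal{M}}$ from which all of $A_{h'}^{\mathcal{M}}$ is reachable in $D^{\mathcal{M}}_{h'}$. Its value is $\mathit{val}_f(X)=\sum_{x\in X\setminus B_{h'}^{\mathcal{M}}}f(x)$, and $\mathit{val}_f(D^{\mathcal{M}}_{h'})=\min\{\mathit{val}_f(X)\mid X\text{ a base for }D^{\mathcal{M}}_{h'}\}$. *)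

theory Defs
  imports Main
begin

datatype 'r role = RAtom 'r | RInv 'r

datatype ('c, 'r, 'i) concept =
    CAtom 'c
  | CNom 'i
  | CNeg "('c, 'r, 'i) concept"
  | CAnd "('c, 'r, 'i) concept" "('c, 'r, 'i) concept"
  | COr "('c, 'r, 'i) concept" "('c, 'r, 'i) concept"
  | CEx "'r role" "('c, 'r, 'i) concept"
  | CAtMost nat "'r role" "('c, 'r, 'i) concept"

datatype ('c, 'r, 'i) formula =
    Incl "('c, 'r, 'i) concept" "('c, 'r, 'i) concept"
  | FNeg "('c, 'r, 'i) formula"
  | FAnd "('c, 'r, 'i) formula" "('c, 'r, 'i) formula"
  | FOr "('c, 'r, 'i) formula" "('c, 'r, 'i) formula"

text \<open>Reachability assertion Reach(B,S,A): (B, S, A); disjointness assertion A1 \<sqinter> A2 \<equiv> \<bottom>: (A1, A2).\<close>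
type_synonym ('c, 'r) reach = "'c \<times> 'r set \<times> 'c"
type_synonym 'c disj = "'c \<times> 'c"

definition reach_B :: "('c, 'r) reach \<Rightarrow> 'c" where "reach_B R = fst R"
definition reach_S :: "('c, 'r) reach \<Rightarrow> 'r set" where "reach_S R = fst (snd R)"
definition reach_A :: "('c, 'r) reach \<Rightarrow> 'c" where "reach_A R = snd (snd R)"

text \<open>An ALCQIO_{b,Re}-formula \<phi> \<and> \<And>RE \<and> \<And>DI, with RE = [Reach(B_1,S_1,A_1),...,Reach(B_h,S_h,A_h)]
  given as a list (so that the index h' is meaningful) and DI a finite set;
  S_i \<subseteq> N_F and compatibility.\<close>
definition alcqio_re_formula ::
  "'r set \<Rightarrow> ('c, 'r, 'i) formula \<Rightarrow> ('c, 'r) reach list \<Rightarrow> 'c disj set \<Rightarrow> bool" where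
  "alcqio_re_formula NF \<phi> RE DI \<longleftrightarrow>
     finite DI \<and>
     (\<forall>R\<in>set RE. reach_S R \<subseteq> NF) \<and>
     (\<forall>i<length RE. \<forall>j<length RE. i \<noteq> j \<longrightarrow> reach_S (RE ! i) \<inter> reach_S (RE ! j) \<noteq> {} \<longrightarrow>
         (reach_A (RE ! i), reach_A (RE ! j)) \<in> DI \<or> (reach_A (RE ! j), reach_A (RE ! i)) \<in> DI)"

record ('a, 'c, 'r, 'i) struct =
  dom :: "'a set"
  cI :: "'c \<Rightarrow> 'a set"
  rI :: "'r \<Rightarrow> ('a \<times> 'a) set"
  nI :: "'i \<Rightarrow> 'a"

definition tau_structure :: "'r set \<Rightarrow> ('a, 'c, 'r, 'i) struct \<Rightarrow> bool" where
  "tau_structure NF M \<longleftrightarrow>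
     finite (dom M) \<and> dom M \<noteq> {} \<and>
     (\<forall>c. cI M c \<subseteq> dom M) \<and>
     (\<forall>r. rI M r \<subseteq> dom M \<times> dom M) \<and>
     (\<forall>i. nI M i \<in> dom M) \<and>
     (\<forall>r\<in>NF. single_valued (rI M r))"

fun role_ext :: "('a, 'c, 'r, 'i) struct \<Rightarrow> 'r role \<Rightarrow> ('a \<times> 'a) set" where
  "role_ext M (RAtom r) = rI M r"
| "role_ext M (RInv r) = (rI M r)\<inverse>"

fun cext :: "('a, 'c, 'r, 'i) struct \<Rightarrow> ('c, 'r, 'i) concept \<Rightarrow> 'a set" where
  "cext M (CAtom A) = cI M A"
| "cext M (CNom a) = {nI M a}"
| "cext M (CNeg C) = dom M - cext M C"
| "cext M (CAnd C D) = cext M C \<inter> cext M D"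
| "cext M (COr C D) = cext M C \<union> cext M D"
| "cext M (CEx r C) = {u \<in> dom M. \<exists>v. (u, v) \<in> role_ext M r \<and> v \<in> cext M C}"
| "cext M (CAtMost n r C) = {u \<in> dom M. card {v. (u, v) \<in> role_ext M r \<and> v \<in> cext M C} \<le> n}"

fun subconcepts :: "('c, 'r, 'i) concept \<Rightarrow> ('c, 'r, 'i) concept set" where
  "subconcepts (CAtom A) = {CAtom A}"
| "subconcepts (CNom a) = {CNom a}"
| "subconcepts (CNeg C) = insert (CNeg C) (subconcepts C)"
| "subconcepts (CAnd C D) = insert (CAnd C D) (subconcepts C \<union> subconcepts D)"
| "subconcepts (COr C D) = insert (COr C D) (subconcepts C \<union> subconcepts D)"
| "subconcepts (CEx r C) = insert (CEx r C) (subconcepts C)"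
| "subconcepts (CAtMost n r C) = insert (CAtMost n r C) (subconcepts C)"

fun Con :: "('c, 'r, 'i) formula \<Rightarrow> ('c, 'r, 'i) concept set" where
  "Con (Incl C D) = subconcepts C \<union> subconcepts D"
| "Con (FNeg \<psi>) = Con \<psi>"
| "Con (FAnd \<psi> \<chi>) = Con \<psi> \<union> Con \<chi>"
| "Con (FOr \<psi> \<chi>) = Con \<psi> \<union> Con \<chi>"

definition TYPES :: "('c, 'r, 'i) formula \<Rightarrow> ('c, 'r, 'i) concept set set" where
  "TYPES \<phi> = Pow (Con \<phi>)"

definition tp :: "('c, 'r, 'i) formula \<Rightarrow> ('a, 'c, 'r, 'i) struct \<Rightarrow> 'a \<Rightarrow> ('c, 'r, 'i) concept set" where
  "tp \<phi> M u = {C \<in> Con \<phi>. u \<in> cext M C}"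

definition Dver :: "('a, 'c, 'r, 'i) struct \<Rightarrow> ('c, 'r) reach \<Rightarrow> 'a set" where
  "Dver M R = cI M (reach_A R)"

definition Dedges :: "('a, 'c, 'r, 'i) struct \<Rightarrow> ('c, 'r) reach \<Rightarrow> ('a \<times> 'a) set" where
  "Dedges M R = (\<Union>s\<in>reach_S R. rI M s) \<inter> (Dver M R \<times> Dver M R)"

text \<open>h'-useful labeling (R is the h'-th reachability assertion).\<close>
definition useful_labeling ::
  "('c, 'r, 'i) formula \<Rightarrow> ('a, 'c, 'r, 'i) struct \<Rightarrow> ('c, 'r) reach \<Rightarrow> ('a \<Rightarrow> nat) \<Rightarrow> bool" where
  "useful_labeling \<phi> M R f \<longleftrightarrow>
     (\<forall>u\<in>Dver M R. f u \<in> {1..card (TYPES \<phi>)}) \<and>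
     (\<forall>u\<in>Dver M R. \<forall>v\<in>Dver M R. f u = f v \<longrightarrow> tp \<phi> M u = tp \<phi> M v) \<and>
     (\<forall>u\<in>Dver M R. u \<in> cI M (reach_B R) \<or>
        (\<exists>v\<in>Dver M R. \<exists>w\<in>Dver M R. f u = f v \<and> f w < f v \<and> (w, v) \<in> Dedges M R))"

definition is_base :: "('a, 'c, 'r, 'i) struct \<Rightarrow> ('c, 'r) reach \<Rightarrow> 'a set \<Rightarrow> bool" where
  "is_base M R X \<longleftrightarrow> X \<subseteq> Dver M R \<and>
     (\<forall>v\<in>Dver M R. \<exists>x\<in>X. (x, v) \<in> (Dedges M R)\<^sup>*)"

definition val_set :: "('a, 'c, 'r, 'i) struct \<Rightarrow> ('c, 'r) reach \<Rightarrow> ('a \<Rightarrow> nat) \<Rightarrow> 'a set \<Rightarrow> nat" where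
  "val_set M R f X = (\<Sum>x\<in>X - cI M (reach_B R). f x)"

definition val_D :: "('a, 'c, 'r, 'i) struct \<Rightarrow> ('c, 'r) reach \<Rightarrow> ('a \<Rightarrow> nat) \<Rightarrow> nat" where
  "val_D M R f = Min {val_set M R f X | X. is_base M R X}"

definition D_connected :: "('a, 'c, 'r, 'i) struct \<Rightarrow> ('c, 'r) reach \<Rightarrow> bool" where
  "D_connected M R \<longleftrightarrow>
     (\<forall>v\<in>Dver M R. \<exists>b\<in>Dver M R \<inter> cI M (reach_B R). (b, v) \<in> (Dedges M R)\<^sup>*)"

end

theory Submission
  imports Defs
begin

text \<open>A base contributes value 0 exactly when it lies inside \<open>B\<^sup>M\<close>, because a useful labeling
  is positive on every vertex; and a base inside \<open>B\<^sup>M\<close> is exactly a witness of connectedness.\<close>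

lemma finite_Dver:
  assumes "tau_structure NF M"
  shows "finite (Dver M R)"
  using assms unfolding tau_structure_def Dver_def by (meson finite_subset)

lemma useful_labeling_pos:
  assumes "useful_labeling \<phi> M R f" and "u \<in> Dver M R"
  shows "0 < f u"
  using assms unfolding useful_labeling_def by fastforce

lemma is_base_Dver: "is_base M R (Dver M R)"
  unfolding is_base_def by auto

lemma val_set_eq_0_iff:
  assumes "finite X" and "\<And>x. x \<in> X \<Longrightarrow> 0 < f x"
  shows "val_set M R f X = 0 \<longleftrightarrow> X \<subseteq> cI M (reach_B R)"
proof -
  have "val_set M R f X = 0 \<longleftrightarrow> (\<forall>x\<in>X - cI M (reach_B R). f x = 0)"
    unfolding val_set_def by (rule sum_eq_0_iff[OF finite_Diff[OF assms(1)]])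
  also have "\<dots> \<longleftrightarrow> X \<subseteq> cI M (reach_B R)"
  proof
    assume zero: "\<forall>x\<in>X - cI M (reach_B R). f x = 0"
    show "X \<subseteq> cI M (reach_B R)"
    proof
      fix x assume "x \<in> X"
      with assms(2) zero show "x \<in> cI M (reach_B R)"
        by (metis DiffI less_irrefl)
    qed
  qed auto
  finally show ?thesis .
qed

lemma finite_base_values:
  assumes "finite (Dver M R)"
  shows "finite {val_set M R f X | X. is_base M R X}"
proof -
  have "{val_set M R f X | X. is_base M R X} \<subseteq> val_set M R f ` Pow (Dver M R)"
    unfolding is_base_def by auto
  moreover have "finite (val_set M R f ` Pow (Dver M R))"
    using assms by simp
  ultimately show ?thesis
    by (rule finite_subset)
qed

lemma val_D_attained:
  assumes "finite (Dver M R)"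
  obtains X where "is_base M R X" and "val_D M R f = val_set M R f X"
proof -
  have "{val_set M R f X | X. is_base M R X} \<noteq> {}"
    using is_base_Dver by blast
  then have "val_D M R f \<in> {val_set M R f X | X. is_base M R X}"
    unfolding val_D_def by (rule Min_in[OF finite_base_values[OF assms]])
  then show thesis
    using that by auto
qed

lemma val_D_le:
  assumes "finite (Dver M R)" and "is_base M R X"
  shows "val_D M R f \<le> val_set M R f X"
  unfolding val_D_def using assms(2) by (blast intro: Min_le finite_base_values[OF assms(1)])

lemma val_D_eq_0_iff_base_in_B:
  assumes "finite (Dver M R)" and "\<And>u. u \<in> Dver M R \<Longrightarrow> 0 < f u"
  shows "val_D M R f = 0 \<longleftrightarrow> (\<exists>X. is_base M R X \<and> X \<subseteq> cI M (reach_B R))"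
proof
  assume "val_D M R f = 0"
  obtain X where X: "is_base M R X" "val_D M R f = val_set M R f X"
    using val_D_attained[OF assms(1)] .
  have "X \<subseteq> Dver M R"
    using X(1) unfolding is_base_def by blast
  then have "val_set M R f X = 0 \<longleftrightarrow> X \<subseteq> cI M (reach_B R)"
    using assms by (intro val_set_eq_0_iff) (auto intro: finite_subset)
  then have "X \<subseteq> cI M (reach_B R)"
    using \<open>val_D M R f = 0\<close> X(2) by simp
  with X(1) show "\<exists>X. is_base M R X \<and> X \<subseteq> cI M (reach_B R)"
    by blast
next
  assume "\<exists>X. is_base M R X \<and> X \<subseteq> cI M (reach_B R)"
  then obtain X where "is_base M R X" and "val_set M R f X = 0"
    unfolding val_set_def by (metis Diff_eq_empty_iff sum.empty)
  then show "val_D M R f = 0"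
    using val_D_le[OF assms(1), of X f] by simp
qed

lemma D_connected_iff_base_in_B:
  "D_connected M R \<longleftrightarrow> (\<exists>X. is_base M R X \<and> X \<subseteq> cI M (reach_B R))"
proof
  assume "D_connected M R"
  then have "is_base M R (Dver M R \<inter> cI M (reach_B R))"
    unfolding D_connected_def is_base_def by auto
  then show "\<exists>X. is_base M R X \<and> X \<subseteq> cI M (reach_B R)"
    by blast
next
  assume "\<exists>X. is_base M R X \<and> X \<subseteq> cI M (reach_B R)"
  then obtain X where base: "X \<subseteq> Dver M R" "\<forall>v\<in>Dver M R. \<exists>x\<in>X. (x, v) \<in> (Dedges M R)\<^sup>*"
    and "X \<subseteq> cI M (reach_B R)"
    unfolding is_base_def by blast
  then have "X \<subseteq> Dver M R \<inter> cI M (reach_B R)"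
    by blast
  with base(2) show "D_connected M R"
    unfolding D_connected_def by (meson subsetD)
qed

theorem lemma5:
  fixes NF :: "'r set"
    and \<phi> :: "('c, 'r, 'i) formula"
    and RE :: "('c, 'r) reach list"
    and DI :: "'c disj set"
    and M :: "('a, 'c, 'r, 'i) struct"
    and h' :: nat
    and f :: "'a \<Rightarrow> nat"
  assumes "alcqio_re_formula NF \<phi> RE DI"
    and "tau_structure NF M"
    and "1 \<le> h'" and "h' \<le> length RE"
    and "useful_labeling \<phi> M (RE ! (h' - 1)) f"
  shows "val_D M (RE ! (h' - 1)) f = 0 \<longleftrightarrow> D_connected M (RE ! (h' - 1))"
  using val_D_eq_0_iff_base_in_B[OF finite_Dver[OF assms(2)] useful_labeling_pos[OF assms(5)]]
  by (simp add: D_connected_iff_base_in_B)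

end
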